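(* Fix $1<p<2$. There exist solutions $g,h$ on $[0,\infty)$ of the system (S) described in the context such that $g(0)+2(3-p)h(0)<0$, $h>0$ and $\frac{dg}{dt}+h>0$ on all of $[0,\infty)$, and, as $r\to\infty$ (where $t=w_s(r)$), \[ g=-r-\frac{4}{3-p}+O(r^{-1}),\qquad h=\frac{r}{3-p}+1+O(r^{-1}). \]
   Context: Mass 2 spatial Schwarzschild: $(\mathbb{R}^3\setminus B_1(0),g_s=(1+1/r)^4\delta_{ij})$, $r=|x|$. Let $u_s$ be the radial solution of $\operatorname{div}_{g_s}(|\nabla u_s|^{p-2}\nabla u_s)=0$ with $u_s=1$ at $r=1$, $u_s\to0$ as $r\to\infty$; $w_s=(1-p)\log u_s$, and $r\mapsto t=w_s(r)$ is an increasing bijection $[1,\infty)\to[0,\infty)$ used to regard functions of $t$ as functions of $r$. $W_s(t)=\int_{\{w_s=t\}}|\nabla w_s|_{g_s}^2\,da_{g_s}$. System (S) for functions $g,h$ of $t$: $\left(\frac{dg}{dt}+h\right)W_s^2+\left(g-2(p-2)h+(p-1)(3-p)\frac{dh}{dt}\right)W_s\frac{dW_s}{dt}+\frac{(p-1)(5-p)}{4}h\left(\frac{dW_s}{dt}\right)^2=0$ and $\left(\frac{dg}{dt}+h\right)W_s^2-\frac{(p-1)(5-p)}{4}h\left(\frac{dW_s}{dt}\right)^2=0$. *)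

theory Defs
  imports "HOL-Analysis.Analysis" "HOL-Library.Landau_Symbols"
begin

text \<open>Conformal factor of the mass 2 spatial Schwarzschild metric g_s = (1+1/r)^4 delta.\<close>
definition schw_phi :: "real \<Rightarrow> real" where
  "schw_phi r = 1 + 1 / r"

text \<open>For a radial function u the p-Laplace equation div_{g_s}(|grad u|^{p-2} grad u) = 0
  reads (r^2 phi^{6-2p} |u'|^{p-2} u')' = 0, i.e. -u' = c (phi^{2p-6} r^{-2})^{1/(p-1)}.
  schw_dens is this profile of -u' (up to the constant c).\<close>
definition schw_dens :: "real \<Rightarrow> real \<Rightarrow> real" where
  "schw_dens p r = (schw_phi r powr (2*p - 6) / r^2) powr (1 / (p - 1))"

definition u_s :: "real \<Rightarrow> real \<Rightarrow> real" where
  "u_s p r = integral {r..} (schw_dens p) / integral {1..} (schw_dens p)"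

definition w_s :: "real \<Rightarrow> real \<Rightarrow> real" where
  "w_s p r = (1 - p) * ln (u_s p r)"

definition r_of_t :: "real \<Rightarrow> real \<Rightarrow> real" where
  "r_of_t p t = (THE r. 1 \<le> r \<and> w_s p r = t)"

text \<open>W_s(t) = integral over the level set {w_s = t} (the coordinate sphere of radius r = r(t))
  of |grad w_s|^2_{g_s} da_{g_s}.  On that sphere |grad w_s|_{g_s} = phi^{-2} |w_s'(r)| is
  constant and the g_s-area is 4 pi r^2 phi^4.\<close>
definition W_s :: "real \<Rightarrow> real \<Rightarrow> real" where
  "W_s p t = (let r = r_of_t p t in
     4 * pi * r^2 * schw_phi r ^ 4 * (schw_phi r powr (-2) * \<bar>deriv (w_s p) r\<bar>)^2)"

end

theory Submission
  imports Defs
begin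

(* Write s = p - 1.  Up to a constant factor, -u_s' is the density dens = schw_dens p, so that
   u_s = tail / tail(1) with tail(r) = int_r^oo dens, and with q = tail / dens one gets
   dw_s/dr = s/q and W_s = 4 pi s^2 r^2 / q^2.  Writing h = beta q and g = -2(3-p) h + gamma q^2,
   system (S) turns into a linear first order system for (beta, gamma) in the variable r, which
   has explicit solutions built from rational functions of r, dens and tail.
   Comparing q with sub- and supersolutions of q' = -1 - q dens'/dens gives
   k r + s <= q <= k r + s + 1/r, where k = s/(3-p), and q < k r (r+1)/(r-1).  These bounds give
   h > 0 and dW_s/dt > 0, hence dg/dt + h > 0 by the second equation of (S), as well as the
   asymptotics; finally gamma(1) = -(3-p) gives g(0) + 2(3-p) h(0) = -(3-p) q(1)^2 < 0. *)

lemma DERIV_nonpos_tendsto_zero_imp_nonneg: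
  fixes f f' :: "real \<Rightarrow> real"
  assumes deriv: "\<And>x. c \<le> x \<Longrightarrow> (f has_real_derivative f' x) (at x)"
    and nonpos: "\<And>x. c \<le> x \<Longrightarrow> f' x \<le> 0"
    and lim: "(f \<longlongrightarrow> 0) at_top"
  shows "0 \<le> f c"
proof -
  have le: "f y \<le> f c" if "c \<le> y" for y
    using that by (intro DERIV_nonpos_imp_nonincreasing[where f=f]) (auto intro: deriv nonpos)
  have "\<forall>\<^sub>F y in at_top. f y \<le> f c"
    using eventually_ge_at_top[of c] by eventually_elim (rule le)
  then show ?thesis
    using lim by (intro tendsto_upperbound) auto
qed

lemma DERIV_neg_tendsto_zero_imp_pos:
  fixes f f' :: "real \<Rightarrow> real"
  assumes deriv: "\<And>x. c \<le> x \<Longrightarrow> (f has_real_derivative f' x) (at x)"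
    and neg: "\<And>x. c \<le> x \<Longrightarrow> f' x < 0"
    and lim: "(f \<longlongrightarrow> 0) at_top"
  shows "0 < f c"
proof -
  have "0 \<le> f (c + 1)"
    using deriv neg
    by (intro DERIV_nonpos_tendsto_zero_imp_nonneg[where f'=f', OF _ _ lim]) (auto intro: less_imp_le)
  moreover have "f (c + 1) < f c"
    by (rule DERIV_neg_imp_decreasing) (auto intro: deriv neg)
  ultimately show ?thesis
    by simp
qed

(* System (S) in the radial variable: there q' = -1 - D q, dr/dt = q/s and W'/W = (2/q)(1 - E q),
   so G' q/s and H' q/s are the t-derivatives of g = G and h = H. *)
lemma linear_system_imp_system_S:
  fixes p s q D E \<beta> \<beta>' \<gamma> \<gamma>' H H' G G' W W' :: real
  assumes p: "s = p - 1" and s: "s \<noteq> 0"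
    and \<gamma>: "\<gamma> = -(2-s)*(\<beta>' - \<beta>*D) + (4-s)*E*\<beta>"
    and \<gamma>': "\<gamma>' = 2*D*\<gamma> + (4-s)*E^2*\<beta>"
    and H: "H = \<beta>*q" and H': "H' = \<beta>'*q + \<beta>*(-1 - D*q)"
    and G: "G = -2*(2-s)*H + \<gamma>*q^2"
    and G': "G' = -2*(2-s)*H' + \<gamma>'*q^2 + 2*\<gamma>*q*(-1 - D*q)"
    and W': "W' = W*(2/s)*(1 - E*q)"
  shows "(G'*q/s + H)*W^2 + (G - 2*(p-2)*H + (p-1)*(3-p)*(H'*q/s))*W*W'
           + (p-1)*(5-p)/4*H*W'^2 = 0"
    and "(G'*q/s + H)*W^2 - (p-1)*(5-p)/4*H*W'^2 = 0"
proof -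
  have p: "p = s + 1"
    using p by simp
  show "(G'*q/s + H)*W^2 + (G - 2*(p-2)*H + (p-1)*(3-p)*(H'*q/s))*W*W'
           + (p-1)*(5-p)/4*H*W'^2 = 0"
    unfolding G G' H H' W' p \<gamma>' \<gamma> using s
    by (simp add: divide_simps) algebra
  show "(G'*q/s + H)*W^2 - (p-1)*(5-p)/4*H*W'^2 = 0"
    unfolding G G' H H' W' p \<gamma>' \<gamma> using s
    by (simp add: divide_simps) algebra
qed

locale schwarzschild_p_harmonic =
  fixes p :: real
  assumes p_gt_1: "1 < p" and p_lt_2: "p < 2"
begin

definition s :: real where "s = p - 1"
definition m :: real where "m = 3 - p"
definition k :: real where "k = s / m"

lemma s_pos: "0 < s" and s_lt_1: "s < 1" and m_eq: "m = 2 - s" and m_pos: "0 < m"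
  and k_pos: "0 < k"
  using p_gt_1 p_lt_2 by (auto simp: s_def m_def k_def)

section \<open>The density and its tail integral\<close>

definition dens :: "real \<Rightarrow> real" where
  "dens = schw_dens p"

definition D :: "real \<Rightarrow> real" where
  "D x = 2*(1 - s - x)/(s*x*(x+1))"

lemma dens_eq_exp:
  assumes "0 < x"
  shows "dens x = exp (-(2*m/s) * ln (x+1) + 2*(1-s)/s * ln x)"
proof -
  define A where "A = 1 + 1/x"
  have A_eq: "A = (x+1)/x"
    using assms by (simp add: A_def field_simps)
  have A: "0 < A" and lnA: "ln A = ln (x+1) - ln x"
    using assms by (simp_all add: A_eq ln_div)
  define B where "B = A powr (2*p-6) / x^2"
  have B: "0 < B"
    using A assms by (simp add: B_def)
  have lnB: "ln B = (2*p-6) * ln A - 2 * ln x"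
    using A assms by (simp add: B_def ln_div ln_powr ln_realpow)
  have p: "2*p - 6 = -2*(2 - s)"
    by (simp add: s_def)
  have "dens x = B powr (1/s)"
    by (simp add: dens_def schw_dens_def schw_phi_def A_def B_def s_def)
  also have "\<dots> = exp ((1/s) * ln B)"
    using B by (simp add: powr_def)
  also have "(1/s) * ln B = -(2*m/s) * ln (x+1) + 2*(1-s)/s * ln x"
    unfolding lnB lnA p m_eq using s_pos by (simp add: field_simps)
  finally show ?thesis .
qed

lemma dens_pos: "0 < x \<Longrightarrow> 0 < dens x"
  by (simp add: dens_eq_exp)

lemma dens_deriv:
  assumes "0 < x"
  shows "(dens has_real_derivative dens x * D x) (at x)"
proof -
  define a b where "a = -(2*m/s)" and "b = 2*(1-s)/s"
  have dens: "dens y = exp (a * ln (y+1) + b * ln y)" if "0 < y" for y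
    unfolding a_def b_def using that by (rule dens_eq_exp)
  have "((\<lambda>y. exp (a * ln (y+1) + b * ln y)) has_real_derivative
      exp (a * ln (x+1) + b * ln x) * (a * (1/(x+1)) + b * (1/x))) (at x)"
    using assms by (auto intro!: derivative_eq_intros)
  moreover have "a * (1/(x+1)) + b * (1/x) = D x"
    using assms s_pos unfolding a_def b_def D_def m_eq by (simp add: divide_simps) algebra
  ultimately have "((\<lambda>y. exp (a * ln (y+1) + b * ln y)) has_real_derivative dens x * D x) (at x)"
    unfolding dens[OF assms] by simp
  then show ?thesis
    by (rule has_field_derivative_transform_within_open[where S="{0<..}"])
       (use assms in \<open>auto simp: dens\<close>)
qed

lemma continuous_on_dens: "S \<subseteq> {0<..} \<Longrightarrow> continuous_on S dens"
  by (intro continuous_at_imp_continuous_on ballI DERIV_isCont[OF dens_deriv]) auto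

lemma dens_le_powr:
  assumes "0 < x"
  shows "dens x \<le> x powr (-(2/s))"
proof -
  define a b where "a = -(2*m/s)" and "b = 2*(1-s)/s"
  have "a * ln (x+1) \<le> a * ln x"
    using assms m_pos s_pos unfolding a_def by (intro mult_left_mono_neg) auto
  then have "dens x \<le> exp ((a + b) * ln x)"
    unfolding dens_eq_exp[OF assms] a_def[symmetric] b_def[symmetric] by (simp add: distrib_right)
  also have "a + b = -(2/s)"
    using s_pos unfolding a_def b_def by (simp add: m_eq field_simps)
  finally show ?thesis
    using assms by (simp add: powr_def)
qed

lemma dens_le_inverse_square:
  assumes "1 \<le> x"
  shows "dens x \<le> 1/x^2"
proof -
  have "dens x \<le> x powr (-(2/s))"
    using assms by (intro dens_le_powr) auto
  also have "\<dots> \<le> x powr (-2)"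
    using assms s_pos s_lt_1 by (intro powr_mono) (auto simp: field_simps)
  finally show ?thesis
    using assms by (simp add: powr_neg_numeral)
qed

lemma has_integral_powr_minus_2_div_s:
  "0 < c \<Longrightarrow> ((\<lambda>x. x powr (-(2/s))) has_integral -(c powr (-(2/s) + 1)) / (-(2/s) + 1)) {c..}"
  using s_pos s_lt_1 by (intro has_integral_powr_to_inf) (auto simp: field_simps)

lemma dens_integrable_on:
  assumes "0 < c"
  shows "dens integrable_on {c..}"
proof (rule measurable_bounded_by_integrable_imp_integrable)
  show "dens \<in> borel_measurable (lebesgue_on {c..})"
    using assms by (intro continuous_imp_measurable_on_sets_lebesgue continuous_on_dens) auto
  show "(\<lambda>x. x powr (-(2/s))) integrable_on {c..}"
    using has_integral_powr_minus_2_div_s[OF assms] by blast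
  show "norm (dens x) \<le> x powr (-(2/s))" if "x \<in> {c..}" for x
    using that assms dens_le_powr[of x] dens_pos[of x] by auto
qed auto

definition tail :: "real \<Rightarrow> real" where
  "tail x = integral {x..} dens"

lemma tail_nonneg: "0 < x \<Longrightarrow> 0 \<le> tail x"
  unfolding tail_def using dens_integrable_on
  by (intro integral_nonneg) (auto intro!: less_imp_le[OF dens_pos])

lemma tail_tendsto_0: "(tail \<longlongrightarrow> 0) at_top"
proof (rule Lim_null_comparison)
  define e where "e = -(2/s) + 1"
  have "e < 0"
    using s_pos s_lt_1 by (simp add: e_def field_simps)
  have bound: "norm (tail x) \<le> -(x powr e) / e" if "0 < x" for x
  proof -
    have "tail x \<le> integral {x..} (\<lambda>y. y powr (-(2/s)))"
      unfolding tail_def using that has_integral_powr_minus_2_div_s[OF that]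
        dens_integrable_on[OF that]
      by (intro integral_le) (auto intro!: dens_le_powr)
    also have "\<dots> = -(x powr e) / e"
      unfolding e_def using has_integral_powr_minus_2_div_s[OF that] by (rule integral_unique)
    finally show ?thesis
      using tail_nonneg[OF that] by simp
  qed
  show "\<forall>\<^sub>F x in at_top. norm (tail x) \<le> -(x powr e) / e"
    using eventually_gt_at_top[of 0] by eventually_elim (rule bound)
  have "((\<lambda>x. x powr e) \<longlongrightarrow> 0) at_top"
    using \<open>e < 0\<close> by (intro tendsto_neg_powr filterlim_ident)
  then show "((\<lambda>x. -(x powr e) / e) \<longlongrightarrow> 0) at_top"
    using tendsto_minus[OF tendsto_divide_zero] by fastforce
qed

lemma tail_deriv:
  assumes "0 < x"
  shows "(tail has_real_derivative - dens x) (at x)"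
proof -
  have split: "tail y = integral {y..x+1} dens + tail (x+1)" if "0 < y" "y \<le> x+1" for y
  proof -
    have "(dens has_integral (integral {y..x+1} dens + tail (x+1))) ({y..x+1} \<union> {x+1..})"
    proof (rule has_integral_Un)
      show "(dens has_integral integral {y..x+1} dens) {y..x+1}"
        using that by (intro integrable_integral integrable_continuous_interval continuous_on_dens) auto
      show "(dens has_integral tail (x+1)) {x+1..}"
        unfolding tail_def using assms by (intro integrable_integral dens_integrable_on) auto
      have "{y..x+1} \<inter> {x+1..} = {x+1}"
        using that by auto
      then show "negligible ({y..x+1} \<inter> {x+1..})"
        by simp
    qed
    moreover have "{y..x+1} \<union> {x+1..} = {y..}"
      using that by auto
    ultimately show ?thesis
      unfolding tail_def using integral_unique by metis
  qed
  have "((\<lambda>y. integral {y..x+1} dens) has_real_derivative - dens x) (at x within {x/2..x+1})"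
    using assms by (intro integral_has_real_derivative' continuous_on_dens) auto
  then have "((\<lambda>y. integral {y..x+1} dens + tail (x+1)) has_real_derivative - dens x) (at x)"
    using assms by (subst (asm) at_within_Icc_at) (auto intro!: derivative_eq_intros)
  then show ?thesis
    by (rule has_field_derivative_transform_within_open[where S="{x/2<..<x+1}"])
       (use assms in \<open>auto intro!: split[symmetric]\<close>)
qed

definition q :: "real \<Rightarrow> real" where
  "q x = tail x / dens x"

lemma q_deriv:
  assumes "0 < x"
  shows "(q has_real_derivative -1 - D x * q x) (at x)"
proof -
  have "(q has_real_derivative ((- dens x) * dens x - tail x * (dens x * D x)) / (dens x * dens x)) (at x)"
    unfolding q_def[abs_def] using assms dens_pos[OF assms]
    by (intro DERIV_divide tail_deriv dens_deriv) auto
  moreover have "((- dens x) * dens x - tail x * (dens x * D x)) / (dens x * dens x) = -1 - D x * q x"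
    using dens_pos[OF assms] unfolding q_def by (simp add: field_simps)
  ultimately show ?thesis
    by (rule DERIV_cong)
qed

lemma dens_mult_tendsto_0:
  assumes "\<forall>\<^sub>F x in at_top. \<bar>\<Phi> x\<bar> \<le> C * x"
  shows "((\<lambda>x. \<Phi> x * dens x) \<longlongrightarrow> 0) at_top"
proof (rule Lim_null_comparison)
  define e where "e = -(2/s)"
  have "e + 1 < 0"
    using s_pos s_lt_1 by (simp add: e_def field_simps)
  show "\<forall>\<^sub>F x in at_top. norm (\<Phi> x * dens x) \<le> C * x powr (e + 1)"
    using assms eventually_gt_at_top[of 0]
  proof eventually_elim
    case (elim x)
    have "norm (\<Phi> x * dens x) \<le> (C * x) * x powr e"
      unfolding norm_mult e_def using elim dens_le_powr[of x] dens_pos[of x]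
      by (intro mult_mono) auto
    also have "\<dots> = C * x powr (e + 1)"
      using elim by (simp add: powr_add)
    finally show ?case .
  qed
  have "((\<lambda>x. x powr (e + 1)) \<longlongrightarrow> 0) at_top"
    using \<open>e + 1 < 0\<close> by (intro tendsto_neg_powr filterlim_ident)
  then show "((\<lambda>x. C * x powr (e + 1)) \<longlongrightarrow> 0) at_top"
    by (rule tendsto_mult_right_zero)
qed

lemma dens_mult_minus_tail_tendsto_0:
  "\<forall>\<^sub>F x in at_top. \<bar>\<Phi> x\<bar> \<le> C * x \<Longrightarrow> ((\<lambda>x. \<Phi> x * dens x - tail x) \<longlongrightarrow> 0) at_top"
  using tendsto_diff[OF dens_mult_tendsto_0 tail_tendsto_0] by simp

lemma dens_mult_minus_tail_deriv:
  assumes "0 < x" and "(\<Phi> has_real_derivative \<Phi>') (at x)"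
  shows "((\<lambda>x. \<Phi> x * dens x - tail x) has_real_derivative dens x * (\<Phi>' + \<Phi> x * D x + 1)) (at x)"
proof -
  have "((\<lambda>x. \<Phi> x * dens x - tail x) has_real_derivative
      \<Phi>' * dens x + (dens x * D x) * \<Phi> x - (- dens x)) (at x)"
    using assms by (intro DERIV_diff DERIV_mult tail_deriv dens_deriv)
  then show ?thesis
    by (simp add: algebra_simps)
qed

(* Phi dens - tail tends to 0 and has derivative dens (Phi' + Phi D + 1), so a sign of
   Phi' + Phi D + 1 on [c, oo), i.e. Phi being a sub- or supersolution of q' = -1 - D q,
   compares q(c) with Phi(c). *)
lemma q_ge_subsolution:
  assumes c: "0 < c"
    and deriv: "\<And>x. c \<le> x \<Longrightarrow> (\<Phi> has_real_derivative \<Phi>' x) (at x)"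
    and sub: "\<And>x. c \<le> x \<Longrightarrow> 0 \<le> \<Phi>' x + \<Phi> x * D x + 1"
    and growth: "\<forall>\<^sub>F x in at_top. \<bar>\<Phi> x\<bar> \<le> C * x"
  shows "\<Phi> c \<le> q c"
proof -
  have "0 \<le> -(\<Phi> c * dens c - tail c)"
  proof (rule DERIV_nonpos_tendsto_zero_imp_nonneg[where f="\<lambda>x. -(\<Phi> x * dens x - tail x)"
      and f'="\<lambda>x. -(dens x * (\<Phi>' x + \<Phi> x * D x + 1))"])
    fix x assume x: "c \<le> x"
    then show "((\<lambda>x. -(\<Phi> x * dens x - tail x)) has_real_derivative
        -(dens x * (\<Phi>' x + \<Phi> x * D x + 1))) (at x)"
      using c by (intro DERIV_minus dens_mult_minus_tail_deriv deriv) auto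
    show "-(dens x * (\<Phi>' x + \<Phi> x * D x + 1)) \<le> 0"
      using sub[OF x] dens_pos[of x] c x by simp
  next
    show "((\<lambda>x. -(\<Phi> x * dens x - tail x)) \<longlongrightarrow> 0) at_top"
      using tendsto_minus[OF dens_mult_minus_tail_tendsto_0[OF growth]] by simp
  qed
  then show ?thesis
    using dens_pos[OF c] unfolding q_def by (simp add: field_simps)
qed

lemma q_le_supersolution:
  assumes c: "0 < c"
    and deriv: "\<And>x. c \<le> x \<Longrightarrow> (\<Phi> has_real_derivative \<Phi>' x) (at x)"
    and super: "\<And>x. c \<le> x \<Longrightarrow> \<Phi>' x + \<Phi> x * D x + 1 \<le> 0"
    and growth: "\<forall>\<^sub>F x in at_top. \<bar>\<Phi> x\<bar> \<le> C * x"
  shows "q c \<le> \<Phi> c"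
proof -
  have "0 \<le> \<Phi> c * dens c - tail c"
  proof (rule DERIV_nonpos_tendsto_zero_imp_nonneg[where f="\<lambda>x. \<Phi> x * dens x - tail x"
      and f'="\<lambda>x. dens x * (\<Phi>' x + \<Phi> x * D x + 1)"])
    fix x assume x: "c \<le> x"
    then show "((\<lambda>x. \<Phi> x * dens x - tail x) has_real_derivative
        dens x * (\<Phi>' x + \<Phi> x * D x + 1)) (at x)"
      using c by (intro dens_mult_minus_tail_deriv deriv) auto
    show "dens x * (\<Phi>' x + \<Phi> x * D x + 1) \<le> 0"
      using super[OF x] dens_pos[of x] c x by (simp add: mult_nonneg_nonpos)
  qed (rule dens_mult_minus_tail_tendsto_0[OF growth])
  then show ?thesis
    using dens_pos[OF c] unfolding q_def by (simp add: field_simps)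
qed

lemma q_less_strict_supersolution:
  assumes c: "0 < c"
    and deriv: "\<And>x. c \<le> x \<Longrightarrow> (\<Phi> has_real_derivative \<Phi>' x) (at x)"
    and super: "\<And>x. c \<le> x \<Longrightarrow> \<Phi>' x + \<Phi> x * D x + 1 < 0"
    and growth: "\<forall>\<^sub>F x in at_top. \<bar>\<Phi> x\<bar> \<le> C * x"
  shows "q c < \<Phi> c"
proof -
  have "0 < \<Phi> c * dens c - tail c"
  proof (rule DERIV_neg_tendsto_zero_imp_pos[where f="\<lambda>x. \<Phi> x * dens x - tail x"
      and f'="\<lambda>x. dens x * (\<Phi>' x + \<Phi> x * D x + 1)"])
    fix x assume x: "c \<le> x"
    then show "((\<lambda>x. \<Phi> x * dens x - tail x) has_real_derivative
        dens x * (\<Phi>' x + \<Phi> x * D x + 1)) (at x)"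
      using c by (intro dens_mult_minus_tail_deriv deriv) auto
    show "dens x * (\<Phi>' x + \<Phi> x * D x + 1) < 0"
      using super[OF x] dens_pos[of x] c x by (simp add: mult_pos_neg)
  qed (rule dens_mult_minus_tail_tendsto_0[OF growth])
  then show ?thesis
    using dens_pos[OF c] unfolding q_def by (simp add: field_simps)
qed

lemma q_ge:
  assumes "0 < c"
  shows "k*c + s \<le> q c"
proof (rule q_ge_subsolution[where \<Phi>="\<lambda>x. k*x + s" and \<Phi>'="\<lambda>_. k" and C="k + s", OF assms])
  fix x assume "c \<le> x"
  then have x: "0 < x"
    using assms by simp
  then show "((\<lambda>x. k*x + s) has_real_derivative k) (at x)"
    by (auto intro!: derivative_eq_intros)
  have "k + (k*x + s) * D x + 1 = 2*(1-s)/(x*(x+1))"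
    using x s_pos m_pos unfolding D_def k_def m_eq by (simp add: divide_simps) algebra
  then show "0 \<le> k + (k*x + s) * D x + 1"
    using s_lt_1 x by simp
next
  show "\<forall>\<^sub>F x in at_top. \<bar>k*x + s\<bar> \<le> (k + s) * x"
    using eventually_ge_at_top[of 1]
    by eventually_elim (use k_pos s_pos mult_left_mono[of 1 _ s] in \<open>auto simp: algebra_simps\<close>)
qed

lemma q_le:
  assumes "1 \<le> c"
  shows "q c \<le> k*c + s + 1/c"
proof (rule q_le_supersolution[where \<Phi>="\<lambda>x. k*x + s + 1/x" and \<Phi>'="\<lambda>x. k - 1/x^2"
    and C="k + s + 1"])
  show "0 < c"
    using assms by simp
  fix x assume "c \<le> x"
  then have x: "1 \<le> x" "0 < x"
    using assms by auto
  then show "((\<lambda>x. k*x + s + 1/x) has_real_derivative k - 1/x^2) (at x)"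
    by (auto intro!: derivative_eq_intros simp: power2_eq_square field_simps)
  define A where "A = 2 - s + 2 * s^2"
  have "k - 1/x^2 + (k*x + s + 1/x) * D x + 1 = (-A*x + (2 - 3 * s)) / (s*x^2*(x+1))"
    using x s_pos m_pos unfolding A_def D_def k_def m_eq by (simp add: divide_simps) algebra
  moreover have "-A*x + (2 - 3 * s) < 0"
  proof -
    have "A * 1 \<le> A * x"
      using x s_pos s_lt_1 unfolding A_def by (intro mult_left_mono) (auto simp: add_pos_nonneg)
    moreover have "0 < s^2"
      using s_pos by simp
    ultimately show ?thesis
      using s_pos A_def by linarith
  qed
  ultimately show "k - 1/x^2 + (k*x + s + 1/x) * D x + 1 \<le> 0"
    using x s_pos by (simp add: divide_neg_pos less_imp_le)
next
  show "\<forall>\<^sub>F x in at_top. \<bar>k*x + s + 1/x\<bar> \<le> (k + s + 1) * x"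
    using eventually_ge_at_top[of 1]
  proof eventually_elim
    case (elim x)
    have "1/x \<le> x" "0 < 1/x" "s \<le> s * x" "0 < k * x"
      using elim s_pos k_pos mult_left_mono[of 1 x s] one_le_power[of x 2]
      by (auto simp: divide_le_eq power2_eq_square)
    moreover have "(k + s + 1) * x = k*x + s*x + x"
      by (simp add: algebra_simps)
    ultimately show ?case
      using s_pos by (smt (verit))
  qed
qed

lemma q_less:
  assumes "1 < c"
  shows "q c < k*c*(c+1)/(c-1)"
proof (rule q_less_strict_supersolution[where \<Phi>="\<lambda>x. k*x*(x+1)/(x-1)"
    and \<Phi>'="\<lambda>x. k*(x^2-2*x-1)/(x-1)^2" and C="3*k"])
  show "0 < c"
    using assms by simp
  fix x assume "c \<le> x"
  then have x: "1 < x"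
    using assms by auto
  then show "((\<lambda>x. k*x*(x+1)/(x-1)) has_real_derivative k*(x^2-2*x-1)/(x-1)^2) (at x)"
    by (auto intro!: derivative_eq_intros simp: power2_eq_square field_simps)
  have "k*(x^2-2*x-1)/(x-1)^2 + k*x*(x+1)/(x-1) * D x + 1 = -2 * s*x/((2-s)*(x-1)^2)"
    using x s_pos s_lt_1 unfolding D_def k_def m_eq by (simp add: divide_simps) algebra
  moreover have "-2 * s*x/((2-s)*(x-1)^2) < 0"
    using x s_pos s_lt_1 by (intro divide_neg_pos) auto
  ultimately show "k*(x^2-2*x-1)/(x-1)^2 + k*x*(x+1)/(x-1) * D x + 1 < 0"
    by simp
next
  show "\<forall>\<^sub>F x in at_top. \<bar>k*x*(x+1)/(x-1)\<bar> \<le> 3*k * x"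
    using eventually_ge_at_top[of 2]
  proof eventually_elim
    case (elim x)
    have "k*x*(x+1) \<le> (3*k*x)*(x-1)"
      using elim k_pos by (simp add: algebra_simps mult_left_mono)
    then show ?case
      using elim k_pos by (auto simp: divide_simps)
  qed
qed

lemma q_pos: "0 < x \<Longrightarrow> 0 < q x"
  using q_ge[of x] k_pos s_pos by (smt (verit) mult_pos_pos)

lemma tail_pos: "0 < x \<Longrightarrow> 0 < tail x"
  using q_pos[of x] dens_pos[of x] unfolding q_def by (simp add: zero_less_divide_iff)

lemma dens_mult_q:
  assumes "0 < x"
  shows "dens x * q x = tail x"
  using dens_pos[OF assms] unfolding q_def by simp

section \<open>The change of variables t = w_s r\<close>

lemma w_s_eq: "w_s p x = - s * ln (tail x / tail 1)"
  by (simp add: w_s_def u_s_def tail_def dens_def s_def)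

lemma w_s_deriv:
  assumes "0 < x"
  shows "(w_s p has_real_derivative s / q x) (at x)"
proof -
  have "((\<lambda>x. - s * ln (tail x / tail 1)) has_real_derivative
      - s * ((- dens x / tail 1) / (tail x / tail 1))) (at x)"
    using assms tail_pos[OF assms] tail_pos[of 1]
    by (auto intro!: derivative_eq_intros tail_deriv)
  moreover have "- s * ((- dens x / tail 1) / (tail x / tail 1)) = s / q x"
    using tail_pos[OF assms] tail_pos[of 1] dens_pos[OF assms] unfolding q_def
    by (simp add: field_simps)
  ultimately show ?thesis
    unfolding w_s_eq[abs_def] by simp
qed

lemma isCont_w_s: "0 < x \<Longrightarrow> isCont (w_s p) x"
  using w_s_deriv DERIV_isCont by blast

lemma w_s_less: "0 < x \<Longrightarrow> x < y \<Longrightarrow> w_s p x < w_s p y"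
  by (rule DERIV_pos_imp_increasing[of x y])
     (auto intro!: exI w_s_deriv divide_pos_pos s_pos q_pos)

lemma w_s_inj: "0 < x \<Longrightarrow> 0 < y \<Longrightarrow> w_s p x = w_s p y \<Longrightarrow> x = y"
  using w_s_less by (metis less_irrefl linorder_neqE_linordered_idom)

lemma w_s_1: "w_s p 1 = 0"
  using tail_pos[of 1] by (simp add: w_s_eq)

lemma w_s_nonneg: "1 \<le> r \<Longrightarrow> 0 \<le> w_s p r"
  using w_s_less[of 1 r] w_s_1 by (cases "r = 1") auto

lemma filterlim_w_s_at_top: "filterlim (w_s p) at_top at_top"
proof -
  have "((\<lambda>x. tail x / tail 1) \<longlongrightarrow> 0) at_top"
    using tendsto_divide_zero[OF tail_tendsto_0] by simp
  moreover have "\<forall>\<^sub>F x in at_top. tail x / tail 1 > 0"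
    using eventually_gt_at_top[of 0] by eventually_elim (use tail_pos in auto)
  ultimately have "filterlim (\<lambda>x. tail x / tail 1) (at_right 0) at_top"
    by (rule tendsto_imp_filterlim_at_right)
  then have "filterlim (\<lambda>x. ln (tail x / tail 1)) at_bot at_top"
    by (rule filterlim_compose[OF ln_at_0])
  then have "filterlim (\<lambda>x. - ln (tail x / tail 1)) at_top at_top"
    by (simp add: filterlim_uminus_at_bot)
  then have "filterlim (\<lambda>x. s * (- ln (tail x / tail 1))) at_top at_top"
    using s_pos by (intro filterlim_tendsto_pos_mult_at_top[OF tendsto_const]) auto
  then show ?thesis
    unfolding w_s_eq[abs_def] by simp
qed

lemma w_s_IVT:
  assumes "0 < a" "a \<le> b" "w_s p a \<le> y" "y \<le> w_s p b"
  shows "\<exists>x. a \<le> x \<and> x \<le> b \<and> w_s p x = y"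
proof -
  have "continuous_on {a..b} (w_s p)"
    using assms by (intro continuous_at_imp_continuous_on ballI isCont_w_s) auto
  then show ?thesis
    using assms IVT'[of "w_s p" a y b] by auto
qed

lemma w_s_surj:
  assumes "0 \<le> t"
  shows "\<exists>r\<ge>1. w_s p r = t"
proof -
  obtain R where R: "\<And>x. R \<le> x \<Longrightarrow> t \<le> w_s p x"
    using filterlim_w_s_at_top by (auto simp: filterlim_at_top eventually_at_top_linorder)
  then have "t \<le> w_s p (max R 1)"
    by simp
  then show ?thesis
    using w_s_IVT[of 1 "max R 1" t] assms w_s_1 by auto
qed

(* Unlike r_of_t p, this inverse of w_s is meaningful on both sides of t = 0, which is needed
   for its derivative there. *)
definition w_inv :: "real \<Rightarrow> real" where
  "w_inv t = (THE r. 0 < r \<and> w_s p r = t)"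

lemma w_inv_w_s: "0 < r \<Longrightarrow> w_inv (w_s p r) = r"
  unfolding w_inv_def by (rule the_equality) (auto intro: w_s_inj)

lemma r_of_t_inverse:
  assumes "0 \<le> t"
  shows "r_of_t p t = w_inv t" and "1 \<le> r_of_t p t" and "w_s p (r_of_t p t) = t"
proof -
  obtain r where r: "1 \<le> r" "w_s p r = t"
    using w_s_surj[OF assms] by auto
  have "r_of_t p t = r"
    unfolding r_of_t_def by (rule the_equality) (use r in \<open>auto intro: w_s_inj\<close>)
  then show "r_of_t p t = w_inv t" "1 \<le> r_of_t p t" "w_s p (r_of_t p t) = t"
    using r w_inv_w_s[of r] by auto
qed

lemma r_of_t_w_s: "1 \<le> r \<Longrightarrow> r_of_t p (w_s p r) = r"
  using r_of_t_inverse(1)[OF w_s_nonneg] w_inv_w_s by simp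

lemma r_of_t_0: "r_of_t p 0 = 1"
  using r_of_t_w_s[of 1] w_s_1 by simp

lemma w_inv_deriv:
  assumes "0 \<le> t"
  shows "(w_inv has_real_derivative q (w_inv t) / s) (at t)"
proof -
  define r where "r = w_inv t"
  have r: "1 \<le> r" "w_s p r = t"
    using r_of_t_inverse[OF assms] unfolding r_def by auto
  have "(w_inv has_real_derivative inverse (s / q r)) (at t)"
  proof (rule DERIV_inverse_function[where f="w_s p" and a="w_s p (1/2)" and b="w_s p (r+1)"])
    show "(w_s p has_real_derivative s / q r) (at (w_inv t))"
      unfolding r_def[symmetric] using r by (intro w_s_deriv) auto
    show "s / q r \<noteq> 0"
      using s_pos q_pos[of r] r by auto
    show "w_s p (1/2) < t" "t < w_s p (r+1)"
      using w_s_less[of "1/2" r] w_s_less[of r "r+1"] r by auto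
    show "w_s p (w_inv y) = y" if "w_s p (1/2) < y" "y < w_s p (r+1)" for y
    proof -
      have "\<exists>x. 1/2 \<le> x \<and> x \<le> r+1 \<and> w_s p x = y"
        by (rule w_s_IVT) (use that r in auto)
      then obtain x where "1/2 \<le> x" "w_s p x = y"
        by blast
      then show ?thesis
        using w_inv_w_s[of x] by auto
    qed
    have "isCont w_inv (w_s p r)"
      by (rule isCont_inverse_function2[where a="1/2" and b="r+1"])
         (use r in \<open>auto intro: w_inv_w_s isCont_w_s\<close>)
    then show "isCont w_inv t"
      using r by simp
  qed
  then show ?thesis
    unfolding r_def using s_pos by simp
qed

lemma r_of_t_deriv:
  assumes "0 \<le> t"
  shows "(r_of_t p has_real_derivative q (r_of_t p t) / s) (at t within {0..})"
proof -
  have "(w_inv has_real_derivative q (w_inv t) / s) (at t within {0..})"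
    using w_inv_deriv[OF assms] by (rule has_field_derivative_at_within)
  then show ?thesis
    unfolding r_of_t_inverse(1)[OF assms]
    by (rule has_field_derivative_transform_within[where d=1])
       (use assms in \<open>auto simp: r_of_t_inverse\<close>)
qed

definition E :: "real \<Rightarrow> real" where
  "E r = -(1/r + D r)"

lemma E_eq: "0 < r \<Longrightarrow> E r = m*(r-1)/(s*r*(r+1))"
  unfolding E_def D_def m_eq using s_pos by (simp add: divide_simps) algebra

definition W_r :: "real \<Rightarrow> real" where
  "W_r r = 4 * pi * s^2 * (r*r) / (q r * q r)"

definition W_r' :: "real \<Rightarrow> real" where
  "W_r' r = W_r r * (2/q r) * (1 - E r * q r)"

lemma W_r_pos: "0 < r \<Longrightarrow> 0 < W_r r"
  unfolding W_r_def using q_pos[of r] s_pos by simp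

lemma W_s_eq_W_r:
  assumes "0 \<le> t"
  shows "W_s p t = W_r (r_of_t p t)"
proof -
  define r where "r = r_of_t p t"
  have r: "1 \<le> r"
    using r_of_t_inverse[OF assms] unfolding r_def by simp
  have deriv: "deriv (w_s p) r = s / q r"
    using r by (intro DERIV_imp_deriv w_s_deriv) auto
  have abs: "\<bar>s / q r\<bar> = s / q r"
    using s_pos q_pos[of r] r by simp
  have phi: "schw_phi r ^ 4 * (schw_phi r powr (-2) * a)^2 = a^2" for a
  proof -
    have "0 < schw_phi r"
      unfolding schw_phi_def using r by (simp add: add_pos_pos)
    then show ?thesis
      by (simp add: powr_neg_numeral power_mult_distrib power_divide flip: power_mult)
  qed
  have "W_s p t = 4 * pi * r^2 * (schw_phi r ^ 4 * (schw_phi r powr (-2) * (s / q r))^2)"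
    unfolding W_s_def Let_def r_def[symmetric] deriv abs by (simp only: mult.assoc)
  then have "W_s p t = 4 * pi * r^2 * (s / q r)^2"
    unfolding phi .
  then show ?thesis
    unfolding W_r_def r_def[symmetric] by (simp add: power2_eq_square)
qed

lemma W_r_deriv:
  assumes "0 < r"
  shows "(W_r has_real_derivative W_r' r) (at r)"
proof -
  have "(W_r has_real_derivative
      ((4 * pi * s^2 * (1*r + 1*r)) * (q r * q r)
        - 4 * pi * s^2*(r*r) * ((-1 - D r * q r) * q r + (-1 - D r * q r) * q r))
      / ((q r * q r) * (q r * q r))) (at r)"
    unfolding W_r_def[abs_def] using assms q_pos[OF assms]
    by (intro DERIV_divide DERIV_cmult DERIV_mult DERIV_ident q_deriv) auto
  moreover have "((4 * pi * s^2 * (1*r + 1*r)) * (q r * q r)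
        - 4 * pi * s^2*(r*r) * ((-1 - D r * q r) * q r + (-1 - D r * q r) * q r))
      / ((q r * q r) * (q r * q r)) = W_r' r"
    unfolding W_r'_def W_r_def E_def using assms q_pos[OF assms]
    by (simp add: divide_simps) algebra
  ultimately show ?thesis
    by simp
qed

lemma E_mult_q_less_1:
  assumes "1 \<le> r"
  shows "E r * q r < 1"
proof (cases "r = 1")
  case True
  then show ?thesis
    by (simp add: E_eq)
next
  case False
  then have r: "1 < r"
    using assms by simp
  have "0 < E r"
    using r s_pos m_pos by (simp add: E_eq)
  then have "E r * q r < E r * (k*r*(r+1)/(r-1))"
    using q_less[OF r] by (intro mult_strict_left_mono)
  also have "\<dots> = 1"
    using r s_pos m_pos less_1_mult[OF r r] by (simp add: E_eq k_def field_simps)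
  finally show ?thesis .
qed

section \<open>Explicit solution of the linear system\<close>

(* (Z, Y) is a rational solution of the linear system in linear_system_imp_system_S, and
   (P dens - m/2 Z tail, X dens - m/2 Y tail) is a second solution. *)
definition Z :: "real \<Rightarrow> real" where "Z r = (r^2-1)/(s*r^2)"
definition Y :: "real \<Rightarrow> real" where "Y r = m*(m*r^2 - 4*r + m)/(s^2*r^3)"
definition P :: "real \<Rightarrow> real" where "P r = (r+1)^2/(2*r)"
definition X :: "real \<Rightarrow> real" where "X r = m^2*(r^2-1)/(2 * s * r^2)"

definition \<beta> :: "real \<Rightarrow> real" where
  "\<beta> r = Z r + (P r * dens r - m/2 * Z r * tail r) / tail 1"

definition \<beta>' :: "real \<Rightarrow> real" where
  "\<beta>' r = 2/(s*r^3) + (-(r+1)/r^2 * dens r - m/(s*r^3) * tail r) / tail 1"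

definition \<gamma> :: "real \<Rightarrow> real" where
  "\<gamma> r = Y r + (X r * dens r - m/2 * Y r * tail r) / tail 1"

definition \<gamma>' :: "real \<Rightarrow> real" where
  "\<gamma>' r = 2*D r*\<gamma> r + (4-s)*E r^2*\<beta> r"

lemma \<beta>_deriv:
  assumes "0 < r"
  shows "(\<beta> has_real_derivative \<beta>' r) (at r)"
proof -
  have Z': "(Z has_real_derivative 2/(s*r^3)) (at r)"
    unfolding Z_def[abs_def] using assms s_pos
    by (auto intro!: derivative_eq_intros) (simp add: divide_simps, algebra)
  have "(P has_real_derivative (r^2-1)/(2*r^2)) (at r)"
    unfolding P_def[abs_def] using assms
    by (auto intro!: derivative_eq_intros) (simp add: divide_simps, algebra)
  moreover have "(r^2-1)/(2*r^2) = -(r+1)/r^2 - P r * D r - m/2 * Z r"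
    unfolding P_def D_def Z_def m_eq using assms s_pos by (simp add: divide_simps) algebra
  ultimately have P': "(P has_real_derivative -(r+1)/r^2 - P r * D r - m/2 * Z r) (at r)"
    by simp
  have "(\<beta> has_real_derivative 2/(s*r^3) + (((-(r+1)/r^2 - P r * D r - m/2 * Z r) * dens r
      + (dens r * D r) * P r) - ((m/2 * (2/(s*r^3))) * tail r + (- dens r) * (m/2 * Z r))) / tail 1)
      (at r)" (is "(_ has_real_derivative ?d) _")
    unfolding \<beta>_def[abs_def] using assms
    by (intro DERIV_add DERIV_diff DERIV_mult DERIV_cdivide DERIV_cmult Z' P' dens_deriv tail_deriv)
  moreover have "?d = \<beta>' r"
    unfolding \<beta>'_def using assms s_pos tail_pos[of 1] by (simp add: field_simps)
  ultimately show ?thesis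
    by simp
qed

lemma \<gamma>_deriv:
  assumes "0 < r"
  shows "(\<gamma> has_real_derivative \<gamma>' r) (at r)"
proof -
  have "(Y has_real_derivative m*(-m*r^2 + 8*r - 3*m)/(s^2*r^4)) (at r)"
    unfolding Y_def[abs_def] using assms s_pos
    by (auto intro!: derivative_eq_intros) (simp add: divide_simps, algebra)
  moreover have "m*(-m*r^2 + 8*r - 3*m)/(s^2*r^4) = 2*D r*Y r + (4-s)*E r^2*Z r"
    unfolding Y_def D_def E_def Z_def m_eq using assms s_pos by (simp add: divide_simps) algebra
  ultimately have Y': "(Y has_real_derivative 2*D r*Y r + (4-s)*E r^2*Z r) (at r)"
    by simp
  have "(X has_real_derivative m^2/(s*r^3)) (at r)"
    unfolding X_def[abs_def] using assms s_pos
    by (auto intro!: derivative_eq_intros) (simp add: divide_simps, algebra)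
  moreover have "m^2/(s*r^3) = 2*D r*X r + (4-s)*E r^2*P r - X r * D r - m/2 * Y r"
    unfolding X_def Y_def D_def E_def P_def m_eq using assms s_pos by (simp add: divide_simps) algebra
  ultimately have X': "(X has_real_derivative 2*D r*X r + (4-s)*E r^2*P r - X r * D r - m/2 * Y r)
      (at r)"
    by simp
  have "(\<gamma> has_real_derivative (2*D r*Y r + (4-s)*E r^2*Z r)
      + (((2*D r*X r + (4-s)*E r^2*P r - X r * D r - m/2 * Y r) * dens r + (dens r * D r) * X r)
         - ((m/2 * (2*D r*Y r + (4-s)*E r^2*Z r)) * tail r + (- dens r) * (m/2 * Y r))) / tail 1)
      (at r)" (is "(_ has_real_derivative ?d) _")
    unfolding \<gamma>_def[abs_def] using assms
    by (intro DERIV_add DERIV_diff DERIV_mult DERIV_cdivide DERIV_cmult Y' X' dens_deriv tail_deriv)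
  moreover have "?d = \<gamma>' r"
    unfolding \<gamma>'_def \<gamma>_def \<beta>_def using tail_pos[of 1] by (simp add: field_simps)
  ultimately show ?thesis
    by simp
qed

lemma \<gamma>_eq:
  assumes "0 < r"
  shows "\<gamma> r = -m*(\<beta>' r - \<beta> r * D r) + (4-s)*E r*\<beta> r"
proof -
  have "Y r = -m*(2/(s*r^3) - Z r*D r) + (4-s)*E r*Z r"
    unfolding Y_def Z_def D_def E_def m_eq using assms s_pos by (simp add: divide_simps) algebra
  moreover have "X r = -m*(-(r+1)/r^2 - P r*D r) + (4-s)*E r*P r"
    unfolding X_def P_def D_def E_def m_eq using assms s_pos by (simp add: divide_simps) algebra
  ultimately show ?thesis
    unfolding \<gamma>_def \<beta>'_def \<beta>_def using tail_pos[of 1] assms s_pos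
    by (simp add: field_simps) algebra
qed

lemma \<gamma>_1: "\<gamma> 1 = - m"
  unfolding \<gamma>_def Y_def X_def using tail_pos[of 1] s_pos unfolding m_eq
  by (simp add: divide_simps) algebra

definition H :: "real \<Rightarrow> real" where
  "H r = \<beta> r * q r"

definition H' :: "real \<Rightarrow> real" where
  "H' r = \<beta>' r * q r + \<beta> r * (-1 - D r * q r)"

definition G :: "real \<Rightarrow> real" where
  "G r = -2*m*H r + \<gamma> r * (q r)^2"

definition G' :: "real \<Rightarrow> real" where
  "G' r = -2*m*H' r + \<gamma>' r*(q r)^2 + 2*\<gamma> r*q r*(-1 - D r*q r)"

lemma H_deriv: "0 < r \<Longrightarrow> (H has_real_derivative H' r) (at r)"
  unfolding H_def[abs_def] H'_def
  by (auto intro!: derivative_eq_intros \<beta>_deriv q_deriv simp: algebra_simps)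

lemma G_deriv: "0 < r \<Longrightarrow> (G has_real_derivative G' r) (at r)"
  unfolding G_def[abs_def] G'_def
  by (auto intro!: derivative_eq_intros H_deriv \<gamma>_deriv q_deriv simp: algebra_simps power2_eq_square)

lemma G_plus_H_1: "G 1 + 2*m*H 1 = - m * (q 1)^2"
  unfolding G_def using \<gamma>_1 by simp

lemma H_eq: "0 < r \<Longrightarrow> H r = Z r * q r + tail r / tail 1 * (P r - m/2 * Z r * q r)"
  unfolding H_def \<beta>_def using tail_pos[of 1] dens_mult_q[of r, symmetric]
  by (simp add: field_simps)

lemma \<gamma>_mult_q_square:
  "0 < r \<Longrightarrow> \<gamma> r * (q r)^2 = Y r * (q r)^2 + tail r / tail 1 * (q r * (X r - m/2 * Y r * q r))"
  unfolding \<gamma>_def using tail_pos[of 1] dens_mult_q[of r, symmetric]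
  by (simp add: field_simps power2_eq_square)

lemma H_pos:
  assumes "1 \<le> r"
  shows "0 < H r"
proof -
  have r: "0 < r"
    using assms by simp
  have "0 \<le> Z r * q r"
    using assms s_pos q_pos[OF r] unfolding Z_def by (simp add: one_le_power)
  moreover have "0 < P r - m/2 * Z r * q r"
  proof (cases "r = 1")
    case True
    then show ?thesis
      by (simp add: P_def Z_def)
  next
    case False
    then have r1: "1 < r"
      using assms by simp
    have "0 < m/2 * Z r"
      using r1 s_pos m_pos unfolding Z_def by (simp add: field_simps)
    then have "m/2 * Z r * q r < m/2 * Z r * (k*r*(r+1)/(r-1))"
      using q_less[OF r1] by (intro mult_strict_left_mono)
    also have "\<dots> = P r"
      using r1 s_pos m_pos unfolding Z_def P_def k_def by (simp add: field_simps power2_eq_square)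
    finally show ?thesis
      by simp
  qed
  moreover have "0 < tail r / tail 1"
    using tail_pos[OF r] tail_pos[of 1] by simp
  ultimately show ?thesis
    unfolding H_eq[OF r] by (meson add_nonneg_pos mult_pos_pos)
qed

section \<open>Asymptotics\<close>

lemma inverse_bigo_1: "(\<lambda>r::real. 1/r) \<in> O[at_top](\<lambda>_. 1)"
  by (intro bigoI[of _ 1] eventually_mono[OF eventually_ge_at_top[of 1]]) auto

lemma q_minus_linear_bigo: "(\<lambda>r. q r - k*r - s) \<in> O[at_top](\<lambda>r. 1/r)"
proof (intro bigoI[of _ 1] eventually_mono[OF eventually_ge_at_top[of 1]])
  fix r :: real assume "1 \<le> r"
  then show "norm (q r - k*r - s) \<le> 1 * norm (1/r)"
    using q_ge[of r] q_le[of r] by auto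
qed

lemma tail_ratio_bigo: "(\<lambda>r. tail r / tail 1) \<in> O[at_top](\<lambda>r. 1/r)"
proof (intro bigoI[of _ "(k+s+1) / tail 1"] eventually_mono[OF eventually_ge_at_top[of 1]])
  fix r :: real assume r: "1 \<le> r"
  have "1/r \<le> r" "s \<le> s * r"
    using r s_pos mult_left_mono[of 1 r s] one_le_power[of r 2]
    by (auto simp: divide_le_eq power2_eq_square)
  moreover have "(k+s+1) * r = k*r + s*r + r"
    by (simp add: algebra_simps)
  ultimately have "q r \<le> (k+s+1) * r"
    using q_le[OF r] by linarith
  have "tail r = dens r * q r"
    using r by (simp add: dens_mult_q)
  also have "\<dots> \<le> 1/r^2 * ((k+s+1) * r)"
    using r dens_le_inverse_square[OF r] q_pos[of r] \<open>q r \<le> (k+s+1) * r\<close>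
    by (intro mult_mono) auto
  also have "\<dots> = (k+s+1) / r"
    using r by (simp add: power2_eq_square)
  finally have bound: "tail r \<le> (k+s+1) / r" .
  have "norm (tail r / tail 1) = tail r / tail 1"
    using tail_pos[of r] tail_pos[of 1] r by simp
  also have "\<dots> \<le> ((k+s+1) / r) / tail 1"
    using bound tail_pos[of 1] by (intro divide_right_mono) auto
  also have "\<dots> = (k+s+1) / tail 1 * norm (1/r)"
    using r by simp
  finally show "norm (tail r / tail 1) \<le> (k+s+1) / tail 1 * norm (1/r)" .
qed

(* With q = k r + s + d and d, tail/tail(1) = O(1/r), each summand below is d, tail/tail(1) or 1/r
   times a polynomial in d and 1/r, which is bounded. *)
lemma H_asymptotic: "(\<lambda>r. H r - (r/m + 1)) \<in> O[at_top](\<lambda>r. 1/r)"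
proof -
  define d where "d r = q r - k*r - s" for r
  define u where "u r = tail r / tail 1" for r
  have "\<forall>\<^sub>F r in at_top. H r - (r/m + 1) =
      (1/s) * d r - (1/s) * ((1/r) * (k + s*(1/r) + d r*(1/r)))
      + u r * ((1/2) * (2 - m + 2*(1/r) - (m/s)*d r + m*((1/r)*(1/r)) + (m/s)*(d r*((1/r)*(1/r)))))"
    (is "\<forall>\<^sub>F r in at_top. _ = ?e r")
    using eventually_ge_at_top[of 1]
  proof eventually_elim
    case (elim r)
    have "q r = k*r + s + d r"
      by (simp add: d_def)
    then show ?case
      unfolding H_eq[of r, OF less_le_trans[OF zero_less_one elim]] u_def[symmetric]
      using elim s_pos s_lt_1 unfolding Z_def P_def k_def m_eq
      by (simp add: divide_simps) algebra
  qed
  moreover have "?e \<in> O[at_top](\<lambda>r. 1/r)"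
    using q_minus_linear_bigo tail_ratio_bigo unfolding d_def[symmetric] u_def[symmetric]
    by (intro sum_in_bigo cmult_in_bigo_iff[THEN iffD2, OF disjI2] landau_o.big_1_mult bigo_const
        landau_o.big_trans[OF _ inverse_bigo_1] inverse_bigo_1 landau_o.big_refl)
  ultimately show ?thesis
    by (rule landau_o.big.in_cong[THEN iffD2])
qed

lemma G_asymptotic: "(\<lambda>r. G r - (- r - 4/m)) \<in> O[at_top](\<lambda>r. 1/r)"
proof -
  define d where "d r = q r - k*r - s" for r
  define u where "u r = tail r / tail 1" for r
  have Y_q: "Y r * (k*r + s + e)^2 - r - 2*m + 4/m = (2*m/s) * e + (1/r) * ((m/s^2) *
      ((m*((s+e)*(s+e)) - 8*k*(s+e) + m*(k*k)) + (1/r)*(2*m*k*(s+e) - 4*((s+e)*(s+e)))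
       + (1/r)*(1/r)*(m*((s+e)*(s+e)))))" if "0 < r" for r e
    using that s_pos s_lt_1 unfolding Y_def k_def m_eq by (simp add: divide_simps) algebra
  have XY_q: "(k*r + s + e) * (X r - m/2 * Y r * (k*r + s + e)) = -(m^2/(2 * s^2)) *
      (k + (1/r)*(s + e)) * ((m*(s + e) - 4*k) + (1/r)*(2 * s - 4*(s + e)) + (1/r)*(1/r)*(m*(s + e)))"
    if "0 < r" for r e
    using that s_pos s_lt_1 unfolding X_def Y_def k_def m_eq by (simp add: divide_simps) algebra
  have "\<forall>\<^sub>F r in at_top. G r - (- r - 4/m) = -2*m*(H r - (r/m + 1))
      + ((2*m/s) * d r + (1/r) * ((m/s^2) *
         ((m*((s+d r)*(s+d r)) - 8*k*(s+d r) + m*(k*k)) + (1/r)*(2*m*k*(s+d r) - 4*((s+d r)*(s+d r)))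
          + (1/r)*(1/r)*(m*((s+d r)*(s+d r))))))
      + u r * (-(m^2/(2 * s^2)) * (k + (1/r)*(s + d r)) *
         ((m*(s + d r) - 4*k) + (1/r)*(2 * s - 4*(s + d r)) + (1/r)*(1/r)*(m*(s + d r))))"
    (is "\<forall>\<^sub>F r in at_top. _ = ?e r")
    using eventually_gt_at_top[of 0]
  proof eventually_elim
    case (elim r)
    have q: "q r = k*r + s + d r"
      by (simp add: d_def)
    have "G r - (- r - 4/m) = -2*m*(H r - (r/m + 1)) + (Y r * (q r)^2 - r - 2*m + 4/m)
        + u r * (q r * (X r - m/2 * Y r * q r))"
      unfolding G_def \<gamma>_mult_q_square[OF elim] u_def using m_pos by (simp add: field_simps)
    then show ?case
      unfolding q Y_q[OF elim] XY_q[OF elim] .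
  qed
  moreover have "?e \<in> O[at_top](\<lambda>r. 1/r)"
    using q_minus_linear_bigo tail_ratio_bigo unfolding d_def[symmetric] u_def[symmetric]
    by (intro H_asymptotic sum_in_bigo cmult_in_bigo_iff[THEN iffD2, OF disjI2] landau_o.big_1_mult
        bigo_const landau_o.big_trans[OF _ inverse_bigo_1] inverse_bigo_1 landau_o.big_refl)
  ultimately show ?thesis
    by (rule landau_o.big.in_cong[THEN iffD2])
qed

section \<open>The solution of (S)\<close>

definition g :: "real \<Rightarrow> real" where "g t = G (r_of_t p t)"
definition h :: "real \<Rightarrow> real" where "h t = H (r_of_t p t)"
definition g' :: "real \<Rightarrow> real" where "g' t = G' (r_of_t p t) * q (r_of_t p t) / s"
definition h' :: "real \<Rightarrow> real" where "h' t = H' (r_of_t p t) * q (r_of_t p t) / s"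
definition W_s' :: "real \<Rightarrow> real" where "W_s' t = W_r' (r_of_t p t) * q (r_of_t p t) / s"

lemma W_s'_eq:
  "0 \<le> t \<Longrightarrow> W_s' t = W_r (r_of_t p t) * (2/s) * (1 - E (r_of_t p t) * q (r_of_t p t))"
  using q_pos[of "r_of_t p t"] r_of_t_inverse(2)[of t] s_pos
  unfolding W_s'_def W_r'_def by (simp add: field_simps)

lemma system_S_solution:
  assumes t: "0 \<le> t"
  shows "(g has_real_derivative g' t) (at t within {0..})"
    and "(h has_real_derivative h' t) (at t within {0..})"
    and "(W_s p has_real_derivative W_s' t) (at t within {0..})"
    and "(g' t + h t) * (W_s p t)^2
           + (g t - 2*(p-2) * h t + (p-1)*(3-p) * h' t) * W_s p t * W_s' t
           + (p-1)*(5-p)/4 * h t * (W_s' t)^2 = 0"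
    and "(g' t + h t) * (W_s p t)^2 - (p-1)*(5-p)/4 * h t * (W_s' t)^2 = 0"
proof -
  define r where "r = r_of_t p t"
  have r: "0 < r"
    using r_of_t_inverse(2)[OF t] unfolding r_def by simp
  note chain = DERIV_chain2[OF _ r_of_t_deriv[OF t]]
  show "(g has_real_derivative g' t) (at t within {0..})"
    using chain[OF G_deriv[OF r, unfolded r_def]] unfolding g_def[abs_def] g'_def by simp
  show "(h has_real_derivative h' t) (at t within {0..})"
    using chain[OF H_deriv[OF r, unfolded r_def]] unfolding h_def[abs_def] h'_def by simp
  have "((\<lambda>x. W_r (r_of_t p x)) has_real_derivative W_s' t) (at t within {0..})"
    using chain[OF W_r_deriv[OF r, unfolded r_def]] unfolding W_s'_def by simp
  then show "(W_s p has_real_derivative W_s' t) (at t within {0..})"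
    by (rule has_field_derivative_transform_within[where d=1]) (use t in \<open>auto simp: W_s_eq_W_r\<close>)
  note S = linear_system_imp_system_S[OF s_def _ \<gamma>_eq[OF r, unfolded m_eq] \<gamma>'_def H_def H'_def
      G_def[unfolded m_eq] G'_def[unfolded m_eq] W_s'_eq[OF t, folded r_def]]
  show "(g' t + h t) * (W_s p t)^2
           + (g t - 2*(p-2) * h t + (p-1)*(3-p) * h' t) * W_s p t * W_s' t
           + (p-1)*(5-p)/4 * h t * (W_s' t)^2 = 0"
    using S(1) s_pos unfolding g_def h_def g'_def h'_def W_s_eq_W_r[OF t] r_def[symmetric] by simp
  show "(g' t + h t) * (W_s p t)^2 - (p-1)*(5-p)/4 * h t * (W_s' t)^2 = 0"
    using S(2) s_pos unfolding g_def h_def g'_def h'_def W_s_eq_W_r[OF t] r_def[symmetric] by simp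
qed

lemma h_pos: "0 \<le> t \<Longrightarrow> 0 < h t"
  unfolding h_def using H_pos r_of_t_inverse(2) by blast

lemma g'_plus_h_pos:
  assumes t: "0 \<le> t"
  shows "0 < g' t + h t"
proof -
  define r where "r = r_of_t p t"
  have r: "1 \<le> r" "0 < r"
    using r_of_t_inverse(2)[OF t] unfolding r_def by auto
  have W: "0 < W_s p t"
    unfolding W_s_eq_W_r[OF t] r_def[symmetric] using W_r_pos[OF r(2)] .
  have "0 < W_s' t"
    unfolding W_s'_eq[OF t] r_def[symmetric] using W_r_pos[OF r(2)] s_pos E_mult_q_less_1[OF r(1)]
    by simp
  then have "0 < (p-1)*(5-p)/4 * h t * (W_s' t)^2"
    using p_gt_1 p_lt_2 h_pos[OF t] by simp
  then have "0 < (g' t + h t) * (W_s p t)^2"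
    using system_S_solution(5)[OF t] by simp
  then show ?thesis
    using W by (simp add: zero_less_mult_iff)
qed

lemma g_plus_h_0: "g 0 + 2*(3-p) * h 0 < 0"
  unfolding g_def h_def r_of_t_0 m_def[symmetric] G_plus_H_1 using m_pos q_pos[of 1] by simp

lemma g_asymptotic: "(\<lambda>r. g (w_s p r) - (- r - 4/(3-p))) \<in> O[at_top](\<lambda>r. 1 / r)"
proof -
  have "\<forall>\<^sub>F r in at_top. g (w_s p r) - (- r - 4/(3-p)) = G r - (- r - 4/m)"
    using eventually_ge_at_top[of 1] by eventually_elim (simp add: g_def r_of_t_w_s m_def)
  then show ?thesis
    using G_asymptotic by (rule landau_o.big.in_cong[THEN iffD2])
qed

lemma h_asymptotic: "(\<lambda>r. h (w_s p r) - (r/(3-p) + 1)) \<in> O[at_top](\<lambda>r. 1 / r)"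
proof -
  have "\<forall>\<^sub>F r in at_top. h (w_s p r) - (r/(3-p) + 1) = H r - (r/m + 1)"
    using eventually_ge_at_top[of 1] by eventually_elim (simp add: h_def r_of_t_w_s m_def)
  then show ?thesis
    using H_asymptotic by (rule landau_o.big.in_cong[THEN iffD2])
qed

end

theorem proposition3p11:
  fixes p :: real
  assumes "1 < p" and "p < 2"
  shows "\<exists>g h g' h' W' :: real \<Rightarrow> real.
     (\<forall>t\<ge>0. (g has_real_derivative g' t) (at t within {0..})
           \<and> (h has_real_derivative h' t) (at t within {0..})
           \<and> (W_s p has_real_derivative W' t) (at t within {0..})
           \<and> (g' t + h t) * (W_s p t)^2
               + (g t - 2*(p-2) * h t + (p-1)*(3-p) * h' t) * W_s p t * W' t
               + (p-1)*(5-p)/4 * h t * (W' t)^2 = 0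
           \<and> (g' t + h t) * (W_s p t)^2 - (p-1)*(5-p)/4 * h t * (W' t)^2 = 0)
   \<and> g 0 + 2*(3-p) * h 0 < 0
   \<and> (\<forall>t\<ge>0. h t > 0 \<and> g' t + h t > 0)
   \<and> (\<lambda>r. g (w_s p r) - (- r - 4/(3-p))) \<in> O[at_top](\<lambda>r. 1 / r)
   \<and> (\<lambda>r. h (w_s p r) - (r/(3-p) + 1)) \<in> O[at_top](\<lambda>r. 1 / r)"
proof -
  interpret schwarzschild_p_harmonic p
    using assms by unfold_locales
  show ?thesis
    by (rule exI[of _ g], rule exI[of _ h], rule exI[of _ g'], rule exI[of _ h'], rule exI[of _ W_s'],
        intro conjI allI impI system_S_solution h_pos g'_plus_h_pos g_plus_h_0 g_asymptotic
        h_asymptotic)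
qed

end
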